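(* Let $(H,+,\circ)$ be a commutative multiplicative hyperring with identity and let $P_1,\dots,P_n$ be prime strong $\mathcal{C}$-hyperideals of $H$ such that the intersection of any $n-1$ of the $P_i$'s is not equal to $P_1\cap\cdots\cap P_n$. Then $P_1\cap\cdots\cap P_n$ is an sdf-absorbing hyperideal of $H$ if and only if there is at most one $1\leq i\leq n$ such that $H/P_i$ is not of characteristic $2$.
   Context: A commutative multiplicative hyperring $(H,+,\circ)$ consists of an abelian group $(H,+)$ and an associative, commutative hyperoperation $\circ: H\times H\to P^*(H)$ with $x\circ(y+z)\subseteq x\circ y+x\circ z$ and $x\circ(-y)=-(x\circ y)=(-x)\circ y$. For subsets $A,B$, $A\circ B=\bigcup_{a\in A,b\in B}a\circ b$, $A\pm B=\{a\pm b\}$; $x^2=x\circ x$. Identity: $x\in x\circ 1$ for all $x$. A hyperideal is a nonempty $P$ with $x-y\in P$ and $r\circ x\subseteq P$ for $x,y\in P$, $r\in H$; it is prime if proper and $x\circ y\subseteq P$ implies $x\in P$ or $y\in P$. $H/P=\{x+P\}$ with coset addition and $(x+P)*(y+P)=\{z+P: z\in x\circ y\}$; characteristic $\alpha$ means $\alpha$ is the least positive integer with $\alpha u=0$ for all $u$. Let $\mathcal{C}=\{c_1\circ\cdots\circ c_n: c_i\in H\}$ and $\mathfrak{C}=\{\sum_{i=1}^m C_i: C_i\in\mathcal{C}\}$; $P$ is a strong $\mathcal{C}$-hyperideal if for every $D\in\mathfrak{C}$, $D\cap P\neq\varnothing$ implies $D\subseteq P$. A proper hyperideal $P$ is sdf-absorbing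 if whenever $0\neq x,y\in H$ and $x^2-y^2\subseteq P$, then $x-y\in P$ or $x+y\in P$. *)

theory Defs
  imports Main
begin

text \<open>A commutative multiplicative hyperring is rendered as an abelian group given by
  a type of class ab_group_add (the whole type is the carrier H) together with a
  hyperoperation m :: 'a => 'a => 'a set.\<close>

definition hmult :: "('a \<Rightarrow> 'a \<Rightarrow> 'a set) \<Rightarrow> 'a set \<Rightarrow> 'a set \<Rightarrow> 'a set" where
  "hmult m A B = (\<Union>a\<in>A. \<Union>b\<in>B. m a b)"

definition setplus :: "'a::ab_group_add set \<Rightarrow> 'a set \<Rightarrow> 'a set" where
  "setplus A B = {a + b | a b. a \<in> A \<and> b \<in> B}"

definition setminus :: "'a::ab_group_add set \<Rightarrow> 'a set \<Rightarrow> 'a set" where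
  "setminus A B = {a - b | a b. a \<in> A \<and> b \<in> B}"

definition comm_mult_hyperring :: "('a::ab_group_add \<Rightarrow> 'a \<Rightarrow> 'a set) \<Rightarrow> bool" where
  "comm_mult_hyperring m \<longleftrightarrow>
     (\<forall>x y. m x y \<noteq> {}) \<and>
     (\<forall>x y z. hmult m (m x y) {z} = hmult m {x} (m y z)) \<and>
     (\<forall>x y. m x y = m y x) \<and>
     (\<forall>x y z. m x (y + z) \<subseteq> setplus (m x y) (m x z)) \<and>
     (\<forall>x y. m x (- y) = uminus ` (m x y) \<and> m (- x) y = uminus ` (m x y))"

definition has_identity :: "('a \<Rightarrow> 'a \<Rightarrow> 'a set) \<Rightarrow> bool" where
  "has_identity m \<longleftrightarrow> (\<exists>e. \<forall>x. x \<in> m x e)"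

definition hyperideal :: "('a::ab_group_add \<Rightarrow> 'a \<Rightarrow> 'a set) \<Rightarrow> 'a set \<Rightarrow> bool" where
  "hyperideal m P \<longleftrightarrow> P \<noteq> {} \<and> (\<forall>x\<in>P. \<forall>y\<in>P. x - y \<in> P) \<and> (\<forall>r x. x \<in> P \<longrightarrow> m r x \<subseteq> P)"

definition prime_hyperideal :: "('a::ab_group_add \<Rightarrow> 'a \<Rightarrow> 'a set) \<Rightarrow> 'a set \<Rightarrow> bool" where
  "prime_hyperideal m P \<longleftrightarrow> hyperideal m P \<and> P \<noteq> UNIV \<and>
     (\<forall>x y. m x y \<subseteq> P \<longrightarrow> x \<in> P \<or> y \<in> P)"

fun hprod :: "('a \<Rightarrow> 'a \<Rightarrow> 'a set) \<Rightarrow> 'a list \<Rightarrow> 'a set" where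
  "hprod m [] = {}"
| "hprod m [c] = {c}"
| "hprod m (c # cs) = hmult m {c} (hprod m cs)"

definition classC :: "('a \<Rightarrow> 'a \<Rightarrow> 'a set) \<Rightarrow> 'a set set" where
  "classC m = {hprod m cs | cs. cs \<noteq> []}"

fun setsum_list :: "'a::ab_group_add set list \<Rightarrow> 'a set" where
  "setsum_list [] = {}"
| "setsum_list [C] = C"
| "setsum_list (C # Cs) = setplus C (setsum_list Cs)"

definition classFrakC :: "('a::ab_group_add \<Rightarrow> 'a \<Rightarrow> 'a set) \<Rightarrow> 'a set set" where
  "classFrakC m = {setsum_list Cs | Cs. Cs \<noteq> [] \<and> set Cs \<subseteq> classC m}"

definition strong_C_hyperideal :: "('a::ab_group_add \<Rightarrow> 'a \<Rightarrow> 'a set) \<Rightarrow> 'a set \<Rightarrow> bool" where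
  "strong_C_hyperideal m P \<longleftrightarrow> hyperideal m P \<and>
     (\<forall>D\<in>classFrakC m. D \<inter> P \<noteq> {} \<longrightarrow> D \<subseteq> P)"

definition sdf_absorbing :: "('a::ab_group_add \<Rightarrow> 'a \<Rightarrow> 'a set) \<Rightarrow> 'a set \<Rightarrow> bool" where
  "sdf_absorbing m P \<longleftrightarrow> hyperideal m P \<and> P \<noteq> UNIV \<and>
     (\<forall>x y. x \<noteq> 0 \<longrightarrow> y \<noteq> 0 \<longrightarrow> setminus (m x x) (m y y) \<subseteq> P \<longrightarrow> x - y \<in> P \<or> x + y \<in> P)"

text \<open>Characteristic of the quotient H/P: alpha (x+P) = (alpha x) + P is the zero coset P
  iff alpha x \<in> P; alpha x is the alpha-fold sum of x.\<close>
definition quot_char :: "'a::ab_group_add set \<Rightarrow> nat \<Rightarrow> bool" where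
  "quot_char P \<alpha> \<longleftrightarrow> 0 < \<alpha> \<and> (\<forall>x. (\<Sum>i<\<alpha>. x) \<in> P) \<and>
     (\<forall>\<beta>. 0 < \<beta> \<and> \<beta> < \<alpha> \<longrightarrow> \<not> (\<forall>x. (\<Sum>i<\<beta>. x) \<in> P))"

end

theory Submission
  imports Defs
begin

text \<open>Modulo a strong \<open>\<C>\<close>-hyperideal \<open>Q\<close> every hyperproduct \<open>a \<circ> b\<close> lies in a single coset,
  so \<open>\<circ>\<close> induces a commutative distributive multiplication on \<open>H/Q\<close>. For a prime such \<open>Q\<close>
  this gives \<open>(x - y)(x + y) = x\<^sup>2 - y\<^sup>2\<close> in \<open>H/Q\<close>, hence every \<open>P\<^sub>i\<close> absorbs differences of squares;
  and if \<open>H/Q\<close> is not of characteristic 2 then doubling is injective on \<open>H/Q\<close>. If all but one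
  \<open>H/P\<^sub>i\<close> have characteristic 2, the choice between \<open>x - y\<close> and \<open>x + y\<close> made by the exceptional
  \<open>P\<^sub>i\<close> works for all of them. Conversely, if \<open>H/P\<^sub>i\<close> and \<open>H/P\<^sub>j\<close> are not of characteristic 2,
  take \<open>a\<close> in all \<open>P\<^sub>k\<close> but \<open>P\<^sub>i\<close> and \<open>b\<close> in all but \<open>P\<^sub>j\<close>: then \<open>(a + b)\<^sup>2 - (a - b)\<^sup>2\<close> lies in the
  intersection, whereas neither \<open>2b\<close> nor \<open>2a\<close> does.\<close>

lemma hmult_commute: "comm_mult_hyperring m \<Longrightarrow> m x y = m y x"
  unfolding comm_mult_hyperring_def by simp

lemma hmult_nonempty: "comm_mult_hyperring m \<Longrightarrow> m x y \<noteq> {}"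
  unfolding comm_mult_hyperring_def by simp

lemma hmult_uminus_left: "comm_mult_hyperring m \<Longrightarrow> m (- x) y = uminus ` m x y"
  unfolding comm_mult_hyperring_def by simp

lemma hmult_uminus_right: "comm_mult_hyperring m \<Longrightarrow> m x (- y) = uminus ` m x y"
  unfolding comm_mult_hyperring_def by simp

lemma hmult_uminus_uminus: "comm_mult_hyperring m \<Longrightarrow> m (- x) (- y) = m x y"
  by (simp add: hmult_uminus_left hmult_uminus_right image_image)

lemma hmult_add_right_decompose:
  assumes "comm_mult_hyperring m" and "w \<in> m x (y + z)"
  obtains u v where "w = u + v" "u \<in> m x y" "v \<in> m x z"
proof -
  have "m x (y + z) \<subseteq> setplus (m x y) (m x z)"
    using assms(1) unfolding comm_mult_hyperring_def by simp
  with assms(2) show ?thesis using that unfolding setplus_def by blast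
qed

lemma hmult_add_left_decompose:
  assumes "comm_mult_hyperring m" and "w \<in> m (x + y) z"
  obtains u v where "w = u + v" "u \<in> m x z" "v \<in> m y z"
proof -
  have "w \<in> m z (x + y)" using assms by (simp add: hmult_commute)
  then obtain u v where "w = u + v" "u \<in> m z x" "v \<in> m z y"
    by (rule hmult_add_right_decompose[OF assms(1)])
  with that show ?thesis by (simp add: hmult_commute[OF assms(1)])
qed

lemma hmult_add_add_decompose:
  assumes cm: "comm_mult_hyperring m" and w: "w \<in> m (a + b) (c + d)"
  obtains u1 u2 u3 u4 where "w = u1 + u2 + u3 + u4"
    "u1 \<in> m a c" "u2 \<in> m a d" "u3 \<in> m b c" "u4 \<in> m b d"
proof -
  obtain x y where xy: "w = x + y" "x \<in> m (a + b) c" "y \<in> m (a + b) d"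
    using hmult_add_right_decompose[OF cm w] .
  obtain u1 u3 where "x = u1 + u3" "u1 \<in> m a c" "u3 \<in> m b c"
    using hmult_add_left_decompose[OF cm xy(2)] .
  moreover obtain u2 u4 where "y = u2 + u4" "u2 \<in> m a d" "u4 \<in> m b d"
    using hmult_add_left_decompose[OF cm xy(3)] .
  ultimately show ?thesis using that xy(1) by (simp add: algebra_simps)
qed

lemma hyperideal_diff: "hyperideal m Q \<Longrightarrow> x \<in> Q \<Longrightarrow> y \<in> Q \<Longrightarrow> x - y \<in> Q"
  unfolding hyperideal_def by blast

lemma hyperideal_zero:
  assumes "hyperideal m Q"
  shows "0 \<in> Q"
proof -
  obtain x where "x \<in> Q" using assms unfolding hyperideal_def by blast
  then have "x - x \<in> Q" using hyperideal_diff[OF assms] by blast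
  then show ?thesis by simp
qed

lemma hyperideal_uminus: "hyperideal m Q \<Longrightarrow> x \<in> Q \<Longrightarrow> - x \<in> Q"
  using hyperideal_diff[of m Q 0 x] hyperideal_zero by fastforce

lemma hyperideal_add: "hyperideal m Q \<Longrightarrow> x \<in> Q \<Longrightarrow> y \<in> Q \<Longrightarrow> x + y \<in> Q"
  using hyperideal_diff[of m Q x "- y"] hyperideal_uminus by fastforce

lemma hyperideal_hmult:
  assumes "hyperideal m Q" and "comm_mult_hyperring m" and "x \<in> Q \<or> y \<in> Q"
  shows "m x y \<subseteq> Q"
proof (cases "y \<in> Q")
  case True
  then show ?thesis using assms(1) unfolding hyperideal_def by blast
next
  case False
  then have "m y x \<subseteq> Q" using assms unfolding hyperideal_def by blast
  then show ?thesis using hmult_commute[OF assms(2)] by simp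
qed

lemma hyperideal_INT:
  assumes "\<And>i. i \<in> I \<Longrightarrow> hyperideal m (P i)"
  shows "hyperideal m (\<Inter>i\<in>I. P i)"
  unfolding hyperideal_def
proof (intro conjI ballI allI impI)
  show "(\<Inter>i\<in>I. P i) \<noteq> {}" using assms hyperideal_zero by blast
  show "x - y \<in> (\<Inter>i\<in>I. P i)" if "x \<in> (\<Inter>i\<in>I. P i)" "y \<in> (\<Inter>i\<in>I. P i)" for x y
    using assms hyperideal_diff that by blast
  show "m r x \<subseteq> (\<Inter>i\<in>I. P i)" if "x \<in> (\<Inter>i\<in>I. P i)" for r x
    using assms that unfolding hyperideal_def by blast
qed

lemma strong_C_hyperideal_imp_hyperideal: "strong_C_hyperideal m Q \<Longrightarrow> hyperideal m Q"
  unfolding strong_C_hyperideal_def by simp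

lemma strong_C_hyperideal_hmult_diff:
  assumes cm: "comm_mult_hyperring m" and S: "strong_C_hyperideal m Q"
    and w1: "w1 \<in> m a b" and w2: "w2 \<in> m a b"
  shows "w1 - w2 \<in> Q"
proof -
  \<comment> \<open>\<open>a \<circ> b + a \<circ> (-b)\<close> belongs to \<open>\<frakC>\<close> and contains \<open>w\<^sub>1 - w\<^sub>1 = 0 \<in> Q\<close>.\<close>
  define D where "D = setsum_list [hprod m [a, b], hprod m [a, - b]]"
  have "hprod m [a, b] \<in> classC m" "hprod m [a, - b] \<in> classC m"
    unfolding classC_def by blast+
  then have "D \<in> classFrakC m"
    unfolding D_def classFrakC_def by (intro CollectI exI[of _ "[hprod m [a, b], hprod m [a, - b]]"]) simp
  have D_eq: "D = setplus (m a b) (m a (- b))"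
    by (simp add: D_def hmult_def)
  have "w1 + - w1 \<in> D" "w1 + - w2 \<in> D"
    unfolding D_eq setplus_def hmult_uminus_right[OF cm] using w1 w2 by blast+
  with \<open>D \<in> classFrakC m\<close> S have "w1 + - w2 \<in> Q"
    using hyperideal_zero[OF strong_C_hyperideal_imp_hyperideal[OF S]]
    unfolding strong_C_hyperideal_def by fastforce
  then show ?thesis by simp
qed

lemma prime_strong_C_hyperideal_double_notin:
  assumes cm: "comm_mult_hyperring m" and Pr: "prime_hyperideal m Q"
    and S: "strong_C_hyperideal m Q" and c: "c + c \<notin> Q" and b: "b \<notin> Q"
  shows "b + b \<notin> Q"
proof
  assume bb: "b + b \<in> Q"
  have H: "hyperideal m Q" using S by (rule strong_C_hyperideal_imp_hyperideal)
  obtain z where z: "z \<in> m c (b + b)" using hmult_nonempty[OF cm] by blast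
  have "z \<in> Q" using z hyperideal_hmult[OF H cm] bb by blast
  obtain z1 z2 where zs: "z = z1 + z2" "z1 \<in> m c b" "z2 \<in> m c b"
    using hmult_add_right_decompose[OF cm z] .
  have "m (c + c) b \<subseteq> Q"
  proof
    fix w assume "w \<in> m (c + c) b"
    then obtain w1 w2 where ws: "w = w1 + w2" "w1 \<in> m c b" "w2 \<in> m c b"
      by (rule hmult_add_left_decompose[OF cm])
    have "w1 - z1 \<in> Q" "w2 - z2 \<in> Q"
      using strong_C_hyperideal_hmult_diff[OF cm S] ws zs by blast+
    then have "(w1 - z1) + (w2 - z2) + z \<in> Q"
      using hyperideal_add[OF H] \<open>z \<in> Q\<close> by blast
    moreover have "w = (w1 - z1) + (w2 - z2) + z" using ws zs by (simp add: algebra_simps)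
    ultimately show "w \<in> Q" by simp
  qed
  then show False using Pr c b unfolding prime_hyperideal_def by blast
qed

lemma prime_strong_C_hyperideal_diff_squares:
  assumes cm: "comm_mult_hyperring m" and Pr: "prime_hyperideal m Q"
    and S: "strong_C_hyperideal m Q" and sq: "setminus (m x x) (m y y) \<subseteq> Q"
  shows "x - y \<in> Q \<or> x + y \<in> Q"
proof -
  have "m (x + - y) (x + y) \<subseteq> Q"
  proof
    fix w assume "w \<in> m (x + - y) (x + y)"
    then obtain u1 u2 u3 u4 where us: "w = u1 + u2 + u3 + u4"
      "u1 \<in> m x x" "u2 \<in> m x y" "u3 \<in> m (- y) x" "u4 \<in> m (- y) y"
      by (rule hmult_add_add_decompose[OF cm])
    obtain v3 v4 where vs: "u3 = - v3" "v3 \<in> m x y" "u4 = - v4" "v4 \<in> m y y"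
      using us(4,5) by (auto simp: hmult_uminus_left[OF cm] hmult_commute[OF cm, of y x])
    have "u1 - v4 \<in> Q" using sq us(2) vs(4) unfolding setminus_def by blast
    moreover have "u2 - v3 \<in> Q" using strong_C_hyperideal_hmult_diff[OF cm S us(3) vs(2)] .
    ultimately have "(u1 - v4) + (u2 - v3) \<in> Q"
      using hyperideal_add[OF strong_C_hyperideal_imp_hyperideal[OF S]] by blast
    moreover have "w = (u1 - v4) + (u2 - v3)" using us(1) vs by (simp add: algebra_simps)
    ultimately show "w \<in> Q" by simp
  qed
  then show ?thesis using Pr unfolding prime_hyperideal_def by fastforce
qed

lemma strong_C_hyperideal_square_sum_minus_square_diff:
  assumes cm: "comm_mult_hyperring m" and S: "strong_C_hyperideal m Q"
    and ab: "a \<in> Q \<or> b \<in> Q"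
  shows "setminus (m (a + b) (a + b)) (m (a - b) (a - b)) \<subseteq> Q"
proof
  have H: "hyperideal m Q" using S by (rule strong_C_hyperideal_imp_hyperideal)
  have ab': "a \<in> Q \<or> - b \<in> Q" using ab hyperideal_uminus[OF H] by blast
  fix t assume "t \<in> setminus (m (a + b) (a + b)) (m (a - b) (a - b))"
  then obtain u v where t: "t = u - v" "u \<in> m (a + b) (a + b)" "v \<in> m (a + - b) (a + - b)"
    unfolding setminus_def by auto
  obtain u1 u2 u3 u4 where us: "u = u1 + u2 + u3 + u4"
    "u1 \<in> m a a" "u2 \<in> m a b" "u3 \<in> m b a" "u4 \<in> m b b"
    using hmult_add_add_decompose[OF cm t(2)] .
  obtain v1 v2 v3 v4 where vs: "v = v1 + v2 + v3 + v4"
    "v1 \<in> m a a" "v2 \<in> m a (- b)" "v3 \<in> m (- b) a" "v4 \<in> m (- b) (- b)"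
    using hmult_add_add_decompose[OF cm t(3)] .
  have q: "u2 \<in> Q" "u3 \<in> Q" "v2 \<in> Q" "v3 \<in> Q"
    using hyperideal_hmult[OF H cm, of a b] hyperideal_hmult[OF H cm, of b a]
      hyperideal_hmult[OF H cm, of a "- b"] hyperideal_hmult[OF H cm, of "- b" a]
      ab ab' us(3,4) vs(3,4) by blast+
  have d1: "u1 - v1 \<in> Q" using strong_C_hyperideal_hmult_diff[OF cm S us(2) vs(2)] .
  have d4: "u4 - v4 \<in> Q"
    using strong_C_hyperideal_hmult_diff[OF cm S us(5)] vs(5) hmult_uminus_uminus[OF cm] by simp
  have "(u1 - v1) + (u4 - v4) + u2 + u3 - v2 - v3 \<in> Q"
    by (intro d1 d4 q hyperideal_add[OF H] hyperideal_diff[OF H])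
  moreover have "t = (u1 - v1) + (u4 - v4) + u2 + u3 - v2 - v3"
    using t(1) us(1) vs(1) by (simp add: algebra_simps)
  ultimately show "t \<in> Q" by simp
qed

lemma quot_char_2_iff:
  fixes Q :: "'a::ab_group_add set"
  assumes "Q \<noteq> UNIV"
  shows "quot_char Q 2 \<longleftrightarrow> (\<forall>z. z + z \<in> Q)"
proof -
  have "\<not> (\<forall>x. (\<Sum>i<\<beta>. x) \<in> Q)" if "0 < \<beta>" "\<beta> < 2" for \<beta> :: nat
  proof -
    have "\<beta> = 1" using that by linarith
    then show ?thesis using assms by auto
  qed
  moreover have "(\<Sum>i<2::nat. x) = x + x" for x :: 'a by (simp add: numeral_2_eq_2)
  ultimately show ?thesis unfolding quot_char_def by simp
qed

lemma quot_char_2_diff_iff_add: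
  assumes "hyperideal m Q" and "Q \<noteq> UNIV" and "quot_char Q 2"
  shows "x - y \<in> Q \<longleftrightarrow> x + y \<in> Q"
proof -
  have "y + y \<in> Q" using assms(2,3) quot_char_2_iff by blast
  moreover have "x + y = (x - y) + (y + y)" "x - y = (x + y) - (y + y)" by simp_all
  ultimately show ?thesis using hyperideal_add[OF assms(1)] hyperideal_diff[OF assms(1)] by metis
qed

lemma separating_element:
  assumes "(\<Inter>k\<in>{k. k < n \<and> k \<noteq> i}. P k) \<noteq> (\<Inter>k<n. P k)"
  obtains a where "\<forall>k<n. k \<noteq> i \<longrightarrow> a \<in> P k" and "a \<notin> P i"
proof -
  obtain a where "a \<in> (\<Inter>k\<in>{k. k < n \<and> k \<noteq> i}. P k)" "a \<notin> (\<Inter>k<n. P k)"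
    using assms by blast
  then show ?thesis using that by auto
qed

lemma sdf_absorbing_INT_if_quot_char_2:
  fixes m :: "'a::ab_group_add \<Rightarrow> 'a \<Rightarrow> 'a set"
  assumes cm: "comm_mult_hyperring m"
    and PS: "\<forall>i<n. prime_hyperideal m (P i) \<and> strong_C_hyperideal m (P i)"
    and k: "k < n" and char2: "\<forall>i<n. i \<noteq> k \<longrightarrow> quot_char (P i) 2"
  shows "sdf_absorbing m (\<Inter>i<n. P i)"
proof -
  have H: "hyperideal m (P i)" and NU: "P i \<noteq> UNIV" if "i < n" for i
    using PS that unfolding strong_C_hyperideal_def prime_hyperideal_def by blast+
  have "(\<Inter>i<n. P i) \<subseteq> P k" using k by blast
  then have "(\<Inter>i<n. P i) \<noteq> UNIV" using NU[OF k] by blast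
  moreover have "hyperideal m (\<Inter>i<n. P i)" using H by (intro hyperideal_INT) simp
  moreover have "x - y \<in> (\<Inter>i<n. P i) \<or> x + y \<in> (\<Inter>i<n. P i)"
    if sq: "setminus (m x x) (m y y) \<subseteq> (\<Inter>i<n. P i)" for x y
  proof -
    have either: "x - y \<in> P i \<or> x + y \<in> P i" if "i < n" for i
    proof (rule prime_strong_C_hyperideal_diff_squares[OF cm])
      show "prime_hyperideal m (P i)" "strong_C_hyperideal m (P i)" using PS that by blast+
      show "setminus (m x x) (m y y) \<subseteq> P i" using sq that by blast
    qed
    have both: "x - y \<in> P i \<longleftrightarrow> x + y \<in> P i" if "i < n" "i \<noteq> k" for i
      using quot_char_2_diff_iff_add[OF H[OF that(1)] NU[OF that(1)]] char2 that by blast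
    show ?thesis
    proof (cases "x - y \<in> P k")
      case True
      then have "x - y \<in> P i" if "i < n" for i using either[OF that] both[OF that] by blast
      then show ?thesis by blast
    next
      case False
      then have "x + y \<in> P i" if "i < n" for i using either both[OF that] that k by blast
      then show ?thesis by blast
    qed
  qed
  ultimately show ?thesis unfolding sdf_absorbing_def by blast
qed

lemma sdf_absorbing_INT_imp_quot_char_2:
  fixes m :: "'a::ab_group_add \<Rightarrow> 'a \<Rightarrow> 'a set"
  assumes cm: "comm_mult_hyperring m" and sdf: "sdf_absorbing m (\<Inter>k<n. P k)"
    and PS: "\<forall>k<n. prime_hyperideal m (P k) \<and> strong_C_hyperideal m (P k)"
    and sep: "\<forall>j<n. (\<Inter>k\<in>{k. k < n \<and> k \<noteq> j}. P k) \<noteq> (\<Inter>k<n. P k)"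
    and i: "i < n" and j: "j < n" and "i \<noteq> j"
  shows "quot_char (P i) 2 \<or> quot_char (P j) 2"
proof (rule ccontr)
  assume "\<not> (quot_char (P i) 2 \<or> quot_char (P j) 2)"
  moreover have H: "hyperideal m (P k)" and NU: "P k \<noteq> UNIV" if "k < n" for k
    using PS that unfolding strong_C_hyperideal_def prime_hyperideal_def by blast+
  ultimately obtain ci cj where ci: "ci + ci \<notin> P i" and cj: "cj + cj \<notin> P j"
    using quot_char_2_iff[OF NU[OF i]] quot_char_2_iff[OF NU[OF j]] by blast
  have "(\<Inter>k\<in>{k. k < n \<and> k \<noteq> i}. P k) \<noteq> (\<Inter>k<n. P k)" using sep i by blast
  then obtain a where a: "\<forall>k<n. k \<noteq> i \<longrightarrow> a \<in> P k" "a \<notin> P i"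
    by (rule separating_element)
  have "(\<Inter>k\<in>{k. k < n \<and> k \<noteq> j}. P k) \<noteq> (\<Inter>k<n. P k)" using sep j by blast
  then obtain b where b: "\<forall>k<n. k \<noteq> j \<longrightarrow> b \<in> P k" "b \<notin> P j"
    by (rule separating_element)
  have "b \<in> P i" using b(1) i \<open>i \<noteq> j\<close> by blast
  have "a + b \<noteq> 0"
    using hyperideal_uminus[OF H[OF i] \<open>b \<in> P i\<close>] a(2) by (auto simp: add_eq_0_iff)
  moreover have "a - b \<noteq> 0" using a(2) \<open>b \<in> P i\<close> by auto
  moreover have "setminus (m (a + b) (a + b)) (m (a - b) (a - b)) \<subseteq> P k" if "k < n" for k
  proof (rule strong_C_hyperideal_square_sum_minus_square_diff[OF cm])
    show "strong_C_hyperideal m (P k)" using PS that by blast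
    show "a \<in> P k \<or> b \<in> P k" using a(1) \<open>b \<in> P i\<close> that by blast
  qed
  ultimately have "(a + b) - (a - b) \<in> (\<Inter>k<n. P k) \<or> (a + b) + (a - b) \<in> (\<Inter>k<n. P k)"
    using sdf unfolding sdf_absorbing_def by blast
  then have "b + b \<in> P j \<or> a + a \<in> P i"
    using i j by (auto simp: algebra_simps)
  moreover have "b + b \<notin> P j" "a + a \<notin> P i"
    using prime_strong_C_hyperideal_double_notin[OF cm] PS i j ci cj a(2) b(2) by blast+
  ultimately show False by blast
qed

theorem mainTheorem8:
  fixes m :: "'a::ab_group_add \<Rightarrow> 'a \<Rightarrow> 'a set"
    and P :: "nat \<Rightarrow> 'a set"
    and n :: nat
  assumes "comm_mult_hyperring m"
    and "has_identity m"
    and "n \<ge> 1"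
    and "\<forall>i<n. prime_hyperideal m (P i) \<and> strong_C_hyperideal m (P i)"
    and "\<forall>j<n. (\<Inter>i\<in>{i. i < n \<and> i \<noteq> j}. P i) \<noteq> (\<Inter>i<n. P i)"
  shows "sdf_absorbing m (\<Inter>i<n. P i) \<longleftrightarrow>
         (\<forall>i<n. \<forall>j<n. \<not> quot_char (P i) 2 \<and> \<not> quot_char (P j) 2 \<longrightarrow> i = j)"
proof
  assume "sdf_absorbing m (\<Inter>i<n. P i)"
  then show "\<forall>i<n. \<forall>j<n. \<not> quot_char (P i) 2 \<and> \<not> quot_char (P j) 2 \<longrightarrow> i = j"
    using sdf_absorbing_INT_imp_quot_char_2[OF assms(1) _ assms(4,5)] by blast
next
  assume at_most_one: "\<forall>i<n. \<forall>j<n. \<not> quot_char (P i) 2 \<and> \<not> quot_char (P j) 2 \<longrightarrow> i = j"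
  obtain k where "k < n" "\<forall>i<n. i \<noteq> k \<longrightarrow> quot_char (P i) 2"
  proof (cases "\<exists>k<n. \<not> quot_char (P k) 2")
    case True
    then show ?thesis using that at_most_one by blast
  next
    case False
    then show ?thesis using that[of 0] assms(3) by simp
  qed
  then show "sdf_absorbing m (\<Inter>i<n. P i)"
    using sdf_absorbing_INT_if_quot_char_2[OF assms(1,4)] by blast
qed

end
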